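(* Let $K\subset\mathbb{R}^n$ and $C\subset\mathbb{R}^m$ be nonempty, convex, closed and bounded sets, and let $f,h:\mathbb{R}^n\times\mathbb{R}^m\to\mathbb{R}$ be continuous functions such that, for every $y\in K$, $f(y,\cdot)$ and $h(y,\cdot)$ are convex, and such that $f$ takes only positive values. For every $\varepsilon>0$, the problem $(\mathcal{P}_\varepsilon)$: maximize $f(y,x)$ subject to $y\in K$, $x\in\mathcal{S}_\varepsilon(y)$, admits at least one optimal solution $y_\varepsilon\in K$.
   Context: For $y\in K$ and $\varepsilon>0$, $\mathcal{S}_\varepsilon(y)=\operatorname{argmin}\{h(y,z)+\varepsilon f^2(y,z)\mid z\in C\}$, where $f^2=(f)^2$. A point $y_\varepsilon\in K$ is an optimal solution of $(\mathcal{P}_\varepsilon)$ if $f(y_\varepsilon,x')\ge f(y,x)$ for all $x'\in\mathcal{S}_\varepsilon(y_\varepsilon)$, all $y\in K$ and all $x\in\mathcal{S}_\varepsilon(y)$ (the value $f(y,x)$ does not depend on the choice of $x\in\mathcal{S}_\varepsilon(y)$). *)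

theory Defs
  imports "HOL-Analysis.Analysis"
begin

definition S_eps :: "real \<Rightarrow> ('a \<times> 'b \<Rightarrow> real) \<Rightarrow> ('a \<times> 'b \<Rightarrow> real) \<Rightarrow> 'b set \<Rightarrow> 'a \<Rightarrow> 'b set" where
  "S_eps eps f h C y =
     {z \<in> C. \<forall>z'\<in>C. h (y, z) + eps * (f (y, z))\<^sup>2 \<le> h (y, z') + eps * (f (y, z'))\<^sup>2}"

definition optimal_P_eps :: "real \<Rightarrow> ('a \<times> 'b \<Rightarrow> real) \<Rightarrow> ('a \<times> 'b \<Rightarrow> real) \<Rightarrow> 'a set \<Rightarrow> 'b set \<Rightarrow> 'a \<Rightarrow> bool" where
  "optimal_P_eps eps f h K C ye \<longleftrightarrow>
     ye \<in> K \<and>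
     (\<forall>x'\<in>S_eps eps f h C ye. \<forall>y\<in>K. \<forall>x\<in>S_eps eps f h C y. f (ye, x') \<ge> f (y, x))"

end

theory Submission
  imports Defs
begin

text \<open>Maximise \<open>f\<close> over the graph of \<open>S_eps\<close> on \<open>K\<close>: the lower-level objective
  \<open>h + \<epsilon> f\<^sup>2\<close> is continuous, so this graph is closed in the compact set \<open>K \<times> C\<close>, and a
  maximiser \<open>(y\<^sub>\<epsilon>, x\<^sub>\<epsilon>)\<close> exists. It is an optimal solution of \<open>P\<^sub>\<epsilon>\<close> because \<open>f(y, \<cdot>)\<close> is
  constant on each \<open>S_eps(y)\<close>: if two minimisers had different \<open>f\<close>-values, their midpoint
  would do strictly better, as \<open>h(y, \<cdot>)\<close> and \<open>f(y, \<cdot>)\<close> are convex, \<open>f \<ge> 0\<close> and the square is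
  strictly convex.\<close>

lemma square_midpoint_less:
  fixes a b :: "'a::linordered_field"
  assumes "a \<noteq> b"
  shows "((a + b) / 2)\<^sup>2 < (a\<^sup>2 + b\<^sup>2) / 2"
proof -
  have "0 < (a - b)\<^sup>2"
    using assms by simp
  then show ?thesis
    by (simp add: power2_eq_square field_simps)
qed

lemma S_eps_nonempty:
  fixes f h :: "'a::topological_space \<times> 'b::topological_space \<Rightarrow> real"
  assumes "compact C" "C \<noteq> {}" "continuous_on UNIV f" "continuous_on UNIV h"
  shows "S_eps eps f h C y \<noteq> {}"
proof -
  have "continuous_on C (\<lambda>z. h (y, z) + eps * (f (y, z))\<^sup>2)"
    by (intro continuous_intros continuous_on_compose2[OF assms(3)]
        continuous_on_compose2[OF assms(4)]) auto
  then obtain x where "x \<in> C" "\<forall>z\<in>C. h (y, x) + eps * (f (y, x))\<^sup>2 \<le> h (y, z) + eps * (f (y, z))\<^sup>2"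
    using continuous_attains_inf[OF assms(1,2)] by blast
  then show ?thesis
    by (auto simp: S_eps_def)
qed

lemma compact_S_eps_graph:
  fixes f h :: "'a::topological_space \<times> 'b::topological_space \<Rightarrow> real"
  assumes "compact K" "compact C" "continuous_on UNIV f" "continuous_on UNIV h"
  shows "compact (SIGMA y:K. S_eps eps f h C y)"
proof -
  define g where "g p = h p + eps * (f p)\<^sup>2" for p
  have g: "continuous_on UNIV g"
    unfolding g_def using assms(3,4) by (intro continuous_intros) auto
  have "closed {p. g p \<le> g (fst p, z)}" for z
    by (intro closed_Collect_le continuous_on_compose2[OF g] continuous_intros) auto
  then have "closed (\<Inter>z\<in>C. {p. g p \<le> g (fst p, z)})"
    by blast
  moreover have "(SIGMA y:K. S_eps eps f h C y) = (K \<times> C) \<inter> (\<Inter>z\<in>C. {p. g p \<le> g (fst p, z)})"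
    by (auto simp: S_eps_def g_def)
  ultimately show ?thesis
    using assms(1,2) by (simp add: compact_Int_closed compact_Times)
qed

lemma S_eps_f_eq:
  fixes f h :: "'a \<times> 'b::real_vector \<Rightarrow> real"
  assumes "convex C" "eps > 0"
    and f_convex: "convex_on C (\<lambda>x. f (y, x))" and h_convex: "convex_on C (\<lambda>x. h (y, x))"
    and f_nonneg: "\<And>x. x \<in> C \<Longrightarrow> f (y, x) \<ge> 0"
    and x1: "x1 \<in> S_eps eps f h C y" and x2: "x2 \<in> S_eps eps f h C y"
  shows "f (y, x1) = f (y, x2)"
proof (rule ccontr)
  assume "f (y, x1) \<noteq> f (y, x2)"
  define a b where "a = f (y, x1)" and "b = f (y, x2)"
  define m where "m = (1 - 1/2) *\<^sub>R x1 + (1/2::real) *\<^sub>R x2"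
  have "x1 \<in> C" "x2 \<in> C"
    using x1 x2 by (simp_all add: S_eps_def)
  then have m: "m \<in> C"
    unfolding m_def using \<open>convex C\<close> by (simp add: convexD)
  have hm: "h (y, m) \<le> (h (y, x1) + h (y, x2)) / 2"
    using convex_onD[OF h_convex, of "1/2" x1 x2] \<open>x1 \<in> C\<close> \<open>x2 \<in> C\<close> by (simp add: m_def)
  have fm: "f (y, m) \<le> (a + b) / 2"
    using convex_onD[OF f_convex, of "1/2" x1 x2] \<open>x1 \<in> C\<close> \<open>x2 \<in> C\<close> by (simp add: m_def a_def b_def)
  have "(f (y, m))\<^sup>2 \<le> ((a + b) / 2)\<^sup>2"
    using fm f_nonneg[OF m] by (intro power_mono) auto
  also have "\<dots> < (a\<^sup>2 + b\<^sup>2) / 2"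
    using \<open>f (y, x1) \<noteq> f (y, x2)\<close> unfolding a_def b_def by (rule square_midpoint_less)
  finally have "eps * (f (y, m))\<^sup>2 < eps * ((a\<^sup>2 + b\<^sup>2) / 2)"
    using \<open>eps > 0\<close> by simp
  moreover have "h (y, x1) + eps * a\<^sup>2 \<le> h (y, m) + eps * (f (y, m))\<^sup>2"
    using x1 m by (simp add: S_eps_def a_def)
  moreover have "h (y, x1) + eps * a\<^sup>2 \<le> h (y, x2) + eps * b\<^sup>2"
    using x1 \<open>x2 \<in> C\<close> by (simp add: S_eps_def a_def b_def)
  moreover have "h (y, x2) + eps * b\<^sup>2 \<le> h (y, x1) + eps * a\<^sup>2"
    using x2 \<open>x1 \<in> C\<close> by (simp add: S_eps_def a_def b_def)
  ultimately show False
    using hm by (simp add: field_simps)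
qed

theorem theorem2p1:
  fixes K :: "(real ^ 'n) set" and C :: "(real ^ 'm) set"
    and f h :: "(real ^ 'n) \<times> (real ^ 'm) \<Rightarrow> real"
  assumes "K \<noteq> {}" "convex K" "closed K" "bounded K"
    and "C \<noteq> {}" "convex C" "closed C" "bounded C"
    and "continuous_on UNIV f" "continuous_on UNIV h"
    and "\<And>y. y \<in> K \<Longrightarrow> convex_on UNIV (\<lambda>x. f (y, x))"
    and "\<And>y. y \<in> K \<Longrightarrow> convex_on UNIV (\<lambda>x. h (y, x))"
    and "\<And>p. f p > 0"
  shows "\<forall>eps>0. \<exists>ye. optimal_P_eps eps f h K C ye"
proof (intro allI impI)
  fix eps :: real
  assume "eps > 0"
  let ?G = "SIGMA y:K. S_eps eps f h C y"
  have "compact K" "compact C"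
    using assms(3,4,7,8) by (auto simp: compact_eq_bounded_closed)
  have "?G \<noteq> {}"
    using S_eps_nonempty[OF \<open>compact C\<close> assms(5,9,10)] assms(1) by blast
  moreover have "compact ?G"
    using compact_S_eps_graph[OF \<open>compact K\<close> \<open>compact C\<close> assms(9,10)] .
  ultimately obtain p where "p \<in> ?G" "\<forall>q\<in>?G. f q \<le> f p"
    using continuous_attains_sup continuous_on_subset[OF assms(9) subset_UNIV] by metis
  moreover obtain ye xe where "p = (ye, xe)"
    by (cases p)
  ultimately have max: "(ye, xe) \<in> ?G" "\<forall>q\<in>?G. f q \<le> f (ye, xe)"
    by simp_all
  then have "ye \<in> K" "xe \<in> S_eps eps f h C ye"
    by auto
  have "f (ye, x') = f (ye, xe)" if "x' \<in> S_eps eps f h C ye" for x'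
  proof (rule S_eps_f_eq[OF assms(6) \<open>eps > 0\<close> _ _ _ that \<open>xe \<in> S_eps eps f h C ye\<close>])
    show "convex_on C (\<lambda>x. f (ye, x))" "convex_on C (\<lambda>x. h (ye, x))"
      using convex_on_subset[OF _ subset_UNIV assms(6)] assms(11,12)[OF \<open>ye \<in> K\<close>] by simp_all
  qed (simp add: assms(13) less_imp_le)
  then have "optimal_P_eps eps f h K C ye"
    unfolding optimal_P_eps_def using \<open>ye \<in> K\<close> max(2) by simp
  then show "\<exists>ye. optimal_P_eps eps f h K C ye" ..
qed

end
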